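(* Let $\mathcal{H}$ be a separable infinite-dimensional complex Hilbert space, let $T\in\mathscr{B}(\mathcal{H})$ have dense range, let $x_0\in\mathcal{H}$ be nonzero and let $0<\varepsilon<\|x_0\|$. Set $$\mathcal{V}_{x_0,\varepsilon}:=\{x\in\mathcal{H}:\|x-x_0\|=\varepsilon\}\cap\{x\in\mathcal{H}:\|x\|\leqslant\sqrt{\|x_0\|^2-\varepsilon^2}\}.$$ Then $Ty_{x_0,\varepsilon}\in\mathcal{V}_{x_0,\varepsilon}$, and $\|y_{x_0,\varepsilon}\|\leqslant\|y\|$ for every $y\in\mathcal{H}$ with $Ty\in\mathcal{V}_{x_0,\varepsilon}$; i.e. $y_{x_0,\varepsilon}$ is the vector of smallest norm whose image under $T$ lies in $\mathcal{V}_{x_0,\varepsilon}$.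
   Context: For $T\in\mathscr{B}(\mathcal{H})$ with dense range, $x_0\neq 0$ and $0<\varepsilon<\|x_0\|$, the extremal vector $y_{x_0,\varepsilon}$ is the unique vector $y_0\in\mathcal{H}$ with $\|Ty_0-x_0\|\leqslant\varepsilon$ and $\|y_0\|=\inf\{\|y\|:\|Ty-x_0\|\leqslant\varepsilon\}$. *)

theory Defs
  imports "HOL-Analysis.Analysis"
begin

text \<open>Complex Hilbert spaces: a real inner product space that is complete (the real
inner product being the real part of the complex one) together with a complex
scalar multiplication extending the real one and compatible with the norm.
By polarization this is exactly a complex Hilbert space.\<close>

class complex_hilbert = real_inner + complete_space +
  fixes scaleC :: "complex \<Rightarrow> 'a \<Rightarrow> 'a" (infixr \<open>*\<^sub>C\<close> 75)
  assumes scaleR_scaleC: "scaleR r x = scaleC (of_real r) x"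
    and scaleC_add_right: "scaleC a (x + y) = scaleC a x + scaleC a y"
    and scaleC_add_left: "scaleC (a + b) x = scaleC a x + scaleC b x"
    and scaleC_scaleC: "scaleC a (scaleC b x) = scaleC (a * b) x"
    and scaleC_one: "scaleC 1 x = x"
    and norm_scaleC: "norm (scaleC a x) = cmod a * norm x"

definition cspan :: "'a::complex_hilbert set \<Rightarrow> 'a set" where
  "cspan S = {(\<Sum>v\<in>t. scaleC (c v) v) | t c. finite t \<and> t \<subseteq> S}"

definition bounded_clinear_op :: "('a::complex_hilbert \<Rightarrow> 'a) \<Rightarrow> bool" where
  "bounded_clinear_op T \<longleftrightarrow> bounded_linear T \<and> (\<forall>c x. T (scaleC c x) = scaleC c (T x))"

text \<open>The extremal vector y_{x0,eps}: the unique y0 with norm (T y0 - x0) \<le> eps and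
norm y0 = inf{norm y : norm (T y - x0) \<le> eps}.\<close>
definition extremal_vector :: "('a::complex_hilbert \<Rightarrow> 'a) \<Rightarrow> 'a \<Rightarrow> real \<Rightarrow> 'a" where
  "extremal_vector T x0 \<epsilon> = (THE y0. norm (T y0 - x0) \<le> \<epsilon> \<and>
      norm y0 = Inf {norm y | y. norm (T y - x0) \<le> \<epsilon>})"

definition V_set :: "'a::complex_hilbert \<Rightarrow> real \<Rightarrow> 'a set" where
  "V_set x0 \<epsilon> = {x. norm (x - x0) = \<epsilon>} \<inter> {x. norm x \<le> sqrt ((norm x0)\<^sup>2 - \<epsilon>\<^sup>2)}"

end

theory Submission
  imports Defs
begin

text \<open>The preimage C = {y. norm (T y - x0) \<le> \<epsilon>} is closed, convex and (by density of the
range) nonempty, so the Hilbert projection theorem makes the extremal vector y0 the unique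
point of minimal norm in C. Shrinking y0 to (1 - t) y0 leaves C for every 0 < t < 1, i.e.
\<epsilon> < norm (u - t w) with u = T y0 - x0 and w = T y0. Letting t tend to 0 gives
norm u = \<epsilon> and Re \<langle>u, w\<rangle> \<le> 0, whence
norm x0^2 = norm (w - u)^2 \<ge> norm w^2 + \<epsilon>^2, i.e. T y0 lies in V. Conversely every y with
T y in V lies in C, so norm y0 \<le> norm y.\<close>

lemma parallelogram_law:
  fixes a b :: "'a::real_inner"
  shows "(norm (a + b))^2 + (norm (a - b))^2 = 2 * (norm a)^2 + 2 * (norm b)^2"
  by (simp add: power2_norm_eq_inner inner_add inner_diff inner_commute algebra_simps)

lemma convex_norm_diff_le_of_norm_lower_bound:
  fixes C :: "'a::real_inner set"
  assumes "convex C" "a \<in> C" "b \<in> C" and lower: "\<And>z. z \<in> C \<Longrightarrow> d \<le> norm z" and "0 \<le> d"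
  shows "(norm (a - b))^2 \<le> 2 * (norm a)^2 + 2 * (norm b)^2 - 4 * d^2"
proof -
  have "(1/2) *\<^sub>R a + (1/2) *\<^sub>R b \<in> C"
    using assms(1-3) by (simp add: convexD)
  then have "d \<le> norm ((1/2) *\<^sub>R (a + b))"
    using lower by (simp add: scaleR_add_right)
  then have "(2 * d)^2 \<le> (norm (a + b))^2"
    using \<open>0 \<le> d\<close> by (intro power_mono) auto
  then show ?thesis
    using parallelogram_law[of a b] by (simp add: power_mult_distrib)
qed

lemma min_norm_point_exists:
  fixes C :: "'a::{real_inner,complete_space} set"
  assumes "closed C" "convex C" "C \<noteq> {}"
  obtains y where "y \<in> C" "\<And>z. z \<in> C \<Longrightarrow> norm y \<le> norm z"
proof -
  define d where "d = Inf (norm ` C)"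
  have bdd: "bdd_below (norm ` C)"
    by (auto intro: bdd_belowI[of _ 0])
  have d_le: "d \<le> norm z" if "z \<in> C" for z
    using bdd that unfolding d_def by (auto intro: cInf_lower)
  have "d \<ge> 0"
    unfolding d_def using \<open>C \<noteq> {}\<close> by (auto intro: cInf_greatest)
  have "d \<in> closure (norm ` C)"
    unfolding d_def using bdd \<open>C \<noteq> {}\<close> by (intro closure_contains_Inf) auto
  then obtain r where r: "\<And>n. r n \<in> norm ` C" and "r \<longlonglongrightarrow> d"
    unfolding closure_sequential by blast
  then have "\<forall>n. \<exists>y. y \<in> C \<and> r n = norm y"
    by blast
  then obtain Y where Y: "\<And>n. Y n \<in> C" and "\<And>n. r n = norm (Y n)"
    by metis
  then have "r = (\<lambda>n. norm (Y n))"
    by auto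
  with \<open>r \<longlonglongrightarrow> d\<close> have norm_Y: "(\<lambda>n. norm (Y n)) \<longlonglongrightarrow> d"
    by simp
  have "Cauchy Y"
  proof (rule CauchyI)
    fix e :: real
    assume "0 < e"
    have "(\<lambda>n. (norm (Y n))^2) \<longlonglongrightarrow> d^2"
      by (intro tendsto_intros norm_Y)
    then have "\<forall>\<^sub>F n in sequentially. (norm (Y n))^2 < d^2 + e^2 / 4"
      using \<open>0 < e\<close> by (intro order_tendstoD) auto
    then obtain M where M: "\<And>n. M \<le> n \<Longrightarrow> (norm (Y n))^2 < d^2 + e^2 / 4"
      unfolding eventually_sequentially by blast
    have "norm (Y m - Y n) < e" if "M \<le> m" "M \<le> n" for m n
    proof -
      have "(norm (Y m - Y n))^2 < e^2"
        using convex_norm_diff_le_of_norm_lower_bound[OF \<open>convex C\<close> Y Y d_le \<open>d \<ge> 0\<close>, of m n]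
          M[OF \<open>M \<le> m\<close>] M[OF \<open>M \<le> n\<close>]
        by linarith
      then show ?thesis
        using \<open>0 < e\<close> by (simp add: power_less_imp_less_base)
    qed
    then show "\<exists>M. \<forall>m\<ge>M. \<forall>n\<ge>M. norm (Y m - Y n) < e"
      by blast
  qed
  then obtain y where "Y \<longlonglongrightarrow> y"
    by (auto simp: Cauchy_convergent_iff convergent_def)
  then have "y \<in> C"
    using \<open>closed C\<close> Y closed_sequentially by blast
  moreover have "norm y = d"
    using tendsto_norm[OF \<open>Y \<longlonglongrightarrow> y\<close>] norm_Y by (rule LIMSEQ_unique)
  ultimately show thesis
    using that d_le by auto
qed

lemma bounded_linear_preimage_cball:
  assumes "bounded_linear T"
  shows "closed (T -` cball x r)" "convex (T -` cball x r)"
  using assms by (auto intro: continuous_closed_vimage convex_linear_vimage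
      bounded_linear.linear linear_continuous_at)

lemma extremal_vector_min_norm:
  fixes T :: "'a::complex_hilbert \<Rightarrow> 'a"
  assumes "bounded_linear T" "closure (range T) = UNIV" "0 < \<epsilon>"
  shows "norm (T (extremal_vector T x0 \<epsilon>) - x0) \<le> \<epsilon>"
    and "\<And>y. norm (T y - x0) \<le> \<epsilon> \<Longrightarrow> norm (extremal_vector T x0 \<epsilon>) \<le> norm y"
proof -
  define C where "C = T -` cball x0 \<epsilon>"
  have C_iff: "y \<in> C \<longleftrightarrow> norm (T y - x0) \<le> \<epsilon>" for y
    by (simp add: C_def dist_norm norm_minus_commute)
  have "closed C" "convex C"
    unfolding C_def using bounded_linear_preimage_cball[OF assms(1)] by auto
  have "C \<noteq> {}"
  proof -
    have "x0 \<in> closure (range T)"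
      using assms(2) by simp
    then obtain y where "dist (T y) x0 < \<epsilon>"
      using \<open>0 < \<epsilon>\<close> unfolding closure_approachable by blast
    then have "y \<in> C"
      by (simp add: C_iff dist_norm)
    then show ?thesis
      by blast
  qed
  obtain y0 where y0: "y0 \<in> C" and min: "\<And>z. z \<in> C \<Longrightarrow> norm y0 \<le> norm z"
    using min_norm_point_exists[OF \<open>closed C\<close> \<open>convex C\<close> \<open>C \<noteq> {}\<close>] by blast
  have "{norm y |y. norm (T y - x0) \<le> \<epsilon>} = norm ` C"
    by (auto simp: C_iff)
  moreover have "Inf (norm ` C) = norm y0"
    using y0 min by (intro cInf_eq_minimum) auto
  moreover have "z = y0" if "z \<in> C" "norm z = norm y0" for z
    using any_closest_point_unique[of C z y0 0] \<open>convex C\<close> \<open>closed C\<close> that y0 min by auto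
  ultimately have "extremal_vector T x0 \<epsilon> = y0"
    unfolding extremal_vector_def using y0 by (intro the_equality) (auto simp: C_iff)
  then show "norm (T (extremal_vector T x0 \<epsilon>) - x0) \<le> \<epsilon>"
    and "\<And>y. norm (T y - x0) \<le> \<epsilon> \<Longrightarrow> norm (extremal_vector T x0 \<epsilon>) \<le> norm y"
    using y0 min by (auto simp: C_iff)
qed

lemma norm_eq_and_inner_nonpos_if_shrinking_escapes:
  fixes u w :: "'a::real_inner"
  assumes "norm u \<le> \<epsilon>" and outside: "\<And>t. 0 < t \<Longrightarrow> t < 1 \<Longrightarrow> \<epsilon> < norm (u - t *\<^sub>R w)"
  shows "norm u = \<epsilon>" and "inner u w \<le> 0"
proof -
  have "((\<lambda>t. norm (u - t *\<^sub>R w)) \<longlongrightarrow> norm (u - 0 *\<^sub>R w)) (at_right 0)"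
    by (intro tendsto_intros)
  moreover have "\<forall>\<^sub>F t in at_right 0. \<epsilon> \<le> norm (u - t *\<^sub>R w)"
    using outside less_imp_le unfolding eventually_at_right_field
    by (metis zero_less_one)
  ultimately have "\<epsilon> \<le> norm u"
    by (auto intro: tendsto_lowerbound)
  then show "norm u = \<epsilon>"
    using \<open>norm u \<le> \<epsilon>\<close> by simp
  show "inner u w \<le> 0"
  proof (rule ccontr)
    assume "\<not> inner u w \<le> 0"
    then obtain s where "s > 0" and closer: "\<And>t. 0 < t \<Longrightarrow> t \<le> s \<Longrightarrow> norm (t *\<^sub>R w - u) < norm u"
      using closer_points_lemma[of u w] by auto
    define t where "t = min s (1/2)"
    have "0 < t" "t \<le> s" "t < 1"
      using \<open>s > 0\<close> by (auto simp: t_def)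
    then have "norm (u - t *\<^sub>R w) < \<epsilon>"
      using closer \<open>norm u = \<epsilon>\<close> by (simp add: norm_minus_commute)
    then show False
      using outside[OF \<open>0 < t\<close> \<open>t < 1\<close>] by simp
  qed
qed

lemma norm_le_sqrt_if_inner_nonpos:
  fixes u w :: "'a::real_inner"
  assumes "inner u w \<le> 0"
  shows "norm w \<le> sqrt ((norm (w - u))^2 - (norm u)^2)"
proof (rule real_le_rsqrt)
  have "(norm (w - u))^2 = (norm w)^2 - 2 * inner u w + (norm u)^2"
    by (simp add: power2_norm_eq_inner inner_diff inner_commute)
  then show "(norm w)^2 \<le> (norm (w - u))^2 - (norm u)^2"
    using assms by linarith
qed

theorem mainTheorem5:
  fixes T :: "'a::complex_hilbert \<Rightarrow> 'a" and x0 :: 'a and \<epsilon> :: real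
  assumes separable: "separable_space (euclidean :: 'a topology)"
    and infinite_dim: "\<forall>S. finite S \<longrightarrow> cspan S \<noteq> (UNIV :: 'a set)"
    and T_bounded: "bounded_clinear_op T"
    and dense_range: "closure (range T) = UNIV"
    and x0_nz: "x0 \<noteq> 0"
    and eps_pos: "0 < \<epsilon>" and eps_lt: "\<epsilon> < norm x0"
  shows "T (extremal_vector T x0 \<epsilon>) \<in> V_set x0 \<epsilon> \<and>
         (\<forall>y. T y \<in> V_set x0 \<epsilon> \<longrightarrow> norm (extremal_vector T x0 \<epsilon>) \<le> norm y)"
proof -
  have "bounded_linear T"
    using T_bounded unfolding bounded_clinear_op_def by simp
  then interpret bounded_linear T .
  define y0 where "y0 = extremal_vector T x0 \<epsilon>"
  have y0_in: "norm (T y0 - x0) \<le> \<epsilon>"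
    unfolding y0_def using \<open>bounded_linear T\<close> dense_range eps_pos by (rule extremal_vector_min_norm)
  have y0_min: "norm y0 \<le> norm y" if "norm (T y - x0) \<le> \<epsilon>" for y
    unfolding y0_def using \<open>bounded_linear T\<close> dense_range eps_pos that by (rule extremal_vector_min_norm)
  have "y0 \<noteq> 0"
    using y0_in eps_lt by (auto simp: zero)
  have "\<epsilon> < norm ((T y0 - x0) - t *\<^sub>R T y0)" if "0 < t" "t < 1" for t
  proof -
    have "norm ((1 - t) *\<^sub>R y0) < norm y0"
      using that \<open>y0 \<noteq> 0\<close> by simp
    then have "\<not> norm (T ((1 - t) *\<^sub>R y0) - x0) \<le> \<epsilon>"
      using y0_min[of "(1 - t) *\<^sub>R y0"] by linarith
    moreover have "T ((1 - t) *\<^sub>R y0) - x0 = (T y0 - x0) - t *\<^sub>R T y0"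
      by (simp add: scaleR diff scaleR_diff_left)
    ultimately show ?thesis
      by simp
  qed
  note boundary = norm_eq_and_inner_nonpos_if_shrinking_escapes[OF y0_in this]
  have "norm (T y0) \<le> sqrt ((norm x0)^2 - \<epsilon>^2)"
    using norm_le_sqrt_if_inner_nonpos[OF boundary(2)] boundary(1) by simp
  then have "T y0 \<in> V_set x0 \<epsilon>"
    using boundary(1) unfolding V_set_def by simp
  moreover have "norm y0 \<le> norm y" if "T y \<in> V_set x0 \<epsilon>" for y
    using that y0_min unfolding V_set_def by simp
  ultimately show ?thesis
    unfolding y0_def by blast
qed

end
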